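(* Let $K\subset\mathbb{R}^n$ be a nonempty compact convex set and let $\{\mathbb{A}_m\}_{m\in\mathbb{N}}$ be a sequence of isometries of $\mathbb{R}^n$. Suppose that the sequence \[K_m=\frac{1}{m}\sum_{j=1}^m \mathbb{A}_j K\] converges in the Hausdorff metric. Then for every nonempty compact set $C\subset\mathbb{R}^n$ with $\mathrm{conv}(C)=K$, the sequence \[C_m=\frac{1}{m}\sum_{j=1}^m \mathbb{A}_j C\] also converges in the Hausdorff metric, and its limit coincides with the limit of $\{K_m\}$.
   Context: For sets $X,Y\subset\mathbb{R}^n$ and $t\ge 0$, $X+Y=\{x+y:x\in X,y\in Y\}$ is the Minkowski sum and $tX=\{tx:x\in X\}$; $\sum_{j=1}^m X_j$ denotes iterated Minkowski sum. $\mathrm{conv}(C)$ is the convex hull of $C$. The Hausdorff distance between sets $A,B$ is $d_H(A,B)=\max\{\sup_{x\in B}d(x,A),\sup_{x\in A}d(x,B)\}$. *)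

theory Defs
  imports "HOL-Analysis.Analysis"
begin

text \<open>Hausdorff distance between sets, as in the paper.
  (Used only for nonempty compact sets, where it is finite.)\<close>
definition hausdorff_dist :: "'a::metric_space set \<Rightarrow> 'a set \<Rightarrow> real" where
  "hausdorff_dist A B = max (SUP x\<in>B. infdist x A) (SUP x\<in>A. infdist x B)"

definition isometry :: "('a::metric_space \<Rightarrow> 'a) \<Rightarrow> bool" where
  "isometry f \<longleftrightarrow> (\<forall>x y. dist (f x) (f y) = dist x y)"

definition mink_avg :: "(nat \<Rightarrow> 'a::real_vector \<Rightarrow> 'a) \<Rightarrow> 'a set \<Rightarrow> nat \<Rightarrow> 'a set" where
  "mink_avg A X m = (\<lambda>x. (1 / real m) *\<^sub>R x) ` (\<Sum>j\<in>{1..m}. A j ` X)"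

definition hausdorff_converges_to :: "(nat \<Rightarrow> 'a::metric_space set) \<Rightarrow> 'a set \<Rightarrow> bool" where
  "hausdorff_converges_to S L \<longleftrightarrow>
     L \<noteq> {} \<and> compact L \<and> (\<lambda>m. hausdorff_dist (S m) L) \<longlonglongrightarrow> 0"

end

theory Submission
  imports Defs
begin

(*
  Since C \<subseteq> K, the average C_m is contained in K_m; the point is that conversely every
  point of K_m lies within diam K / sqrt m of C_m. Write it as (1/m) \<Sum> A_j k_j with
  k_j \<in> K = conv C and round the k_j to points c_j \<in> C one at a time: if e is the error
  \<Sum>_{i<j} (A_i c_i - A_i k_i) accumulated so far, choose c_j with
  <e, A_j c_j - A_j k_j> \<le> 0, which is possible because the isometry A_j is affine, so that
  A_j k_j lies in conv (A_j C). Then |e|^2 grows by at most (diam K)^2 per step, so the total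
  error is at most sqrt m * diam K. Hence d_H(C_m, L) \<le> d_H(K_m, L) + diam K / sqrt m,
  which tends to 0.
*)

lemma isometry_imp_continuous_on:
  assumes "isometry f"
  shows "continuous_on S f"
  using assms unfolding continuous_on_iff isometry_def by metis

lemma isometry_convex_hull_image:
  fixes f :: "'a::real_inner \<Rightarrow> 'a"
  assumes "isometry f"
  shows "f ` (convex hull C) = convex hull (f ` C)"
proof -
  define g where "g x = f x - f 0" for x
  have "linear g"
    using assms unfolding g_def by (intro isometry_linear) (auto simp: isometry_def dist_norm)
  have f_image: "f ` X = (\<lambda>x. f 0 + x) ` g ` X" for X
    by (auto simp: g_def image_image)
  show ?thesis
    unfolding f_image convex_hull_translation convex_hull_linear_image[OF \<open>linear g\<close>] ..
qed

lemma in_convex_hull_imp_inner_le: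
  fixes y :: "'a::real_inner"
  assumes "y \<in> convex hull S"
  shows "\<exists>s\<in>S. inner e s \<le> inner e y"
proof (rule ccontr)
  assume "\<not> ?thesis"
  then have "S \<subseteq> {x. inner e x > inner e y}" by auto
  then have "convex hull S \<subseteq> {x. inner e x > inner e y}"
    by (rule hull_minimal) (rule convex_halfspace_gt)
  with assms show False by auto
qed

lemma convex_hull_sum_rounding:
  fixes y :: "'i \<Rightarrow> 'a::real_inner" and D :: real
  assumes "finite I"
    and "\<And>i. i \<in> I \<Longrightarrow> y i \<in> convex hull S i"
    and "\<And>i s. i \<in> I \<Longrightarrow> s \<in> S i \<Longrightarrow> norm (s - y i) \<le> D"
  shows "\<exists>s. (\<forall>i\<in>I. s i \<in> S i) \<and> (norm (\<Sum>i\<in>I. s i - y i))\<^sup>2 \<le> card I * D\<^sup>2"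
  using assms
proof (induction I rule: finite_induct)
  case empty
  then show ?case by simp
next
  case (insert i I)
  obtain s where s: "\<forall>j\<in>I. s j \<in> S j" and IH: "(norm (\<Sum>j\<in>I. s j - y j))\<^sup>2 \<le> card I * D\<^sup>2"
    using insert.IH insert.prems by blast
  define e where "e = (\<Sum>j\<in>I. s j - y j)"
  obtain t where t: "t \<in> S i" and obtuse: "inner e t \<le> inner e (y i)"
    using in_convex_hull_imp_inner_le insert.prems(1) by blast
  define v where "v = t - y i"
  have "norm v \<le> D"
    using insert.prems(2) t unfolding v_def by blast
  then have "(norm v)\<^sup>2 \<le> D\<^sup>2"
    by (simp add: power_mono)
  have sum_eq: "(\<Sum>j\<in>insert i I. (s(i := t)) j - y j) = v + e"
    using insert.hyps unfolding v_def e_def by (auto intro!: sum.cong)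
  have "(norm (v + e))\<^sup>2 = (norm v)\<^sup>2 + 2 * inner e v + (norm e)\<^sup>2"
    by (simp add: power2_norm_eq_inner inner_add inner_commute)
  also have "\<dots> \<le> D\<^sup>2 + card I * D\<^sup>2"
    using \<open>(norm v)\<^sup>2 \<le> D\<^sup>2\<close> obtuse IH unfolding v_def e_def by (simp add: inner_diff_right)
  also have "\<dots> = card (insert i I) * D\<^sup>2"
    using insert.hyps by (simp add: algebra_simps)
  finally show ?case
    using s t sum_eq by (intro exI[of _ "s(i := t)"]) auto
qed

lemma hausdorff_dist_le:
  assumes "S \<noteq> {}" and "L \<noteq> {}"
    and "\<And>x. x \<in> S \<Longrightarrow> infdist x L \<le> r" and "\<And>y. y \<in> L \<Longrightarrow> infdist y S \<le> r"
  shows "hausdorff_dist S L \<le> r"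
  unfolding hausdorff_dist_def using assms by (auto intro!: cSUP_least)

lemma bdd_above_infdist_image:
  assumes "compact Z"
  shows "bdd_above ((\<lambda>x. infdist x Y) ` Z)"
  using assms
  by (intro bounded_imp_bdd_above compact_imp_bounded compact_continuous_image
      continuous_on_infdist continuous_on_id)

lemma infdist_le_hausdorff_dist:
  assumes "compact S" and "compact L"
  shows "x \<in> S \<Longrightarrow> infdist x L \<le> hausdorff_dist S L"
    and "y \<in> L \<Longrightarrow> infdist y S \<le> hausdorff_dist S L"
proof -
  show "infdist x L \<le> hausdorff_dist S L" if "x \<in> S"
    unfolding hausdorff_dist_def
    using that assms(1) by (intro max.coboundedI2 cSUP_upper bdd_above_infdist_image)
  show "infdist y S \<le> hausdorff_dist S L" if "y \<in> L"
    unfolding hausdorff_dist_def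
    using that assms(2) by (intro max.coboundedI1 cSUP_upper bdd_above_infdist_image)
qed

lemma hausdorff_dist_nonneg:
  assumes "compact S" and "compact L" and "S \<noteq> {}"
  shows "0 \<le> hausdorff_dist S L"
proof -
  obtain x where "x \<in> S" using assms(3) by blast
  then show ?thesis
    using infdist_nonneg infdist_le_hausdorff_dist(1)[OF assms(1,2)] order.trans by blast
qed

lemma infdist_le_infdist_add:
  assumes "T \<noteq> {}" and close: "\<And>t. t \<in> T \<Longrightarrow> \<exists>z\<in>S. dist t z \<le> e"
  shows "infdist y S \<le> infdist y T + e"
proof -
  have "infdist y S - e \<le> dist y t" if "t \<in> T" for t
  proof -
    obtain z where "z \<in> S" "dist t z \<le> e" using close \<open>t \<in> T\<close> by blast
    have "infdist y S \<le> dist y z" using \<open>z \<in> S\<close> by (rule infdist_le)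
    also have "\<dots> \<le> dist y t + dist t z" by (rule dist_triangle)
    finally show ?thesis using \<open>dist t z \<le> e\<close> by simp
  qed
  then have "infdist y S - e \<le> infdist y T"
    unfolding infdist_notempty[OF assms(1)] using assms(1) by (intro cINF_greatest)
  then show ?thesis by simp
qed

lemma hausdorff_dist_le_add_approx:
  assumes "compact T" and "compact L" and "S \<noteq> {}" and "L \<noteq> {}" and "S \<subseteq> T"
    and close: "\<And>t. t \<in> T \<Longrightarrow> \<exists>z\<in>S. dist t z \<le> e"
  shows "hausdorff_dist S L \<le> hausdorff_dist T L + e"
proof (rule hausdorff_dist_le[OF \<open>S \<noteq> {}\<close> \<open>L \<noteq> {}\<close>])
  obtain x where "x \<in> S" using \<open>S \<noteq> {}\<close> by blast
  then have "0 \<le> e"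
    using close \<open>S \<subseteq> T\<close> by (meson subsetD zero_le_dist order.trans)
  show "infdist x L \<le> hausdorff_dist T L + e" if "x \<in> S" for x
    using infdist_le_hausdorff_dist(1)[OF assms(1,2)] \<open>S \<subseteq> T\<close> that \<open>0 \<le> e\<close>
    by (meson add_increasing2 subsetD)
  show "infdist y S \<le> hausdorff_dist T L + e" if "y \<in> L" for y
  proof -
    have "T \<noteq> {}" using \<open>S \<noteq> {}\<close> \<open>S \<subseteq> T\<close> by blast
    then have "infdist y S \<le> infdist y T + e" using close by (rule infdist_le_infdist_add)
    also have "\<dots> \<le> hausdorff_dist T L + e"
      using infdist_le_hausdorff_dist(2)[OF assms(1,2) that] by simp
    finally show ?thesis .
  qed
qed

lemma compact_set_sum:
  fixes S :: "'i \<Rightarrow> 'a::real_normed_vector set"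
  assumes "finite I" and "\<And>i. i \<in> I \<Longrightarrow> compact (S i)"
  shows "compact (\<Sum>i\<in>I. S i)"
  using assms
proof (induction I rule: finite_induct)
  case empty
  then show ?case by simp
next
  case (insert i I)
  have "(\<Sum>i\<in>insert i I. S i) = {a + b | a b. a \<in> S i \<and> b \<in> (\<Sum>i\<in>I. S i)}"
    using insert.hyps by (auto simp: set_plus_def)
  then show ?case
    using insert by (simp add: compact_sums)
qed

lemma mem_mink_avg_iff:
  "z \<in> mink_avg A X m \<longleftrightarrow>
     (\<exists>s. (\<forall>j\<in>{1..m}. s j \<in> A j ` X) \<and> z = (1 / real m) *\<^sub>R (\<Sum>j\<in>{1..m}. s j))"
  by (auto simp: mink_avg_def set_sum_alt)

lemma mink_avg_nonempty:
  assumes "X \<noteq> {}"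
  shows "mink_avg A X m \<noteq> {}"
proof -
  obtain x where "x \<in> X" using assms by blast
  then have "(1 / real m) *\<^sub>R (\<Sum>j\<in>{1..m}. A j x) \<in> mink_avg A X m"
    unfolding mem_mink_avg_iff by (intro exI[of _ "\<lambda>j. A j x"]) auto
  then show ?thesis by blast
qed

lemma mink_avg_mono:
  assumes "C \<subseteq> K"
  shows "mink_avg A C m \<subseteq> mink_avg A K m"
  using assms unfolding subset_iff mem_mink_avg_iff by blast

lemma mink_avg_compact:
  fixes X :: "'a::real_normed_vector set"
  assumes "compact X" and "\<And>j. isometry (A j)"
  shows "compact (mink_avg A X m)"
proof -
  have "compact (\<Sum>j\<in>{1..m}. A j ` X)"
    using assms by (intro compact_set_sum compact_continuous_image isometry_imp_continuous_on
        finite_atLeastAtMost)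
  then show ?thesis
    unfolding mink_avg_def by (rule compact_scaling)
qed

lemma mink_avg_convex_hull_approx:
  fixes C :: "'a::real_inner set"
  assumes iso: "\<And>j. isometry (A j)" and "bounded C" and "m \<ge> 1"
    and "y \<in> mink_avg A (convex hull C) m"
  shows "\<exists>z\<in>mink_avg A C m. dist y z \<le> diameter (convex hull C) / sqrt m"
proof -
  define D where "D = diameter (convex hull C)"
  have "bounded (convex hull C)"
    using \<open>bounded C\<close> by (rule bounded_convex_hull)
  then have "0 \<le> D"
    unfolding D_def by (rule diameter_ge_0)
  obtain t where t: "\<forall>j\<in>{1..m}. t j \<in> A j ` (convex hull C)"
    and y: "y = (1 / real m) *\<^sub>R (\<Sum>j\<in>{1..m}. t j)"
    using assms(4) unfolding mem_mink_avg_iff by blast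
  have near: "norm (s - t j) \<le> D" if j: "j \<in> {1..m}" and s: "s \<in> A j ` C" for j s
  proof -
    obtain c where "c \<in> C" "s = A j c"
      using s by blast
    moreover obtain k where "k \<in> convex hull C" "t j = A j k"
      using t j by blast
    ultimately have "norm (s - t j) = dist c k"
      using iso unfolding isometry_def by (simp add: dist_norm)
    also have "\<dots> \<le> D"
      unfolding D_def using \<open>bounded (convex hull C)\<close> \<open>c \<in> C\<close> \<open>k \<in> convex hull C\<close>
      by (intro diameter_bounded_bound) (auto intro: hull_inc)
    finally show ?thesis .
  qed
  obtain s where s: "\<forall>j\<in>{1..m}. s j \<in> A j ` C"
    and bound: "(norm (\<Sum>j\<in>{1..m}. s j - t j))\<^sup>2 \<le> m * D\<^sup>2"
    using convex_hull_sum_rounding[of "{1..m}" t "\<lambda>j. A j ` C" D] t near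
    by (auto simp: isometry_convex_hull_image[OF iso])
  define z where "z = (1 / real m) *\<^sub>R (\<Sum>j\<in>{1..m}. s j)"
  have "z \<in> mink_avg A C m"
    unfolding mem_mink_avg_iff z_def using s by blast
  have "norm (\<Sum>j\<in>{1..m}. s j - t j) \<le> sqrt (m * D\<^sup>2)"
    using bound by (rule real_le_rsqrt)
  also have "\<dots> = sqrt m * D"
    using \<open>0 \<le> D\<close> by (simp add: real_sqrt_mult)
  finally have "dist y z \<le> (1 / real m) * (sqrt m * D)"
    unfolding y z_def dist_commute[of _ z] dist_norm
    by (simp add: sum_subtractf scaleR_diff_right[symmetric] norm_minus_commute divide_right_mono)
  also have "\<dots> = D / sqrt m"
    using \<open>m \<ge> 1\<close> by (simp add: field_simps real_sqrt_mult[symmetric])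
  finally show ?thesis
    using \<open>z \<in> mink_avg A C m\<close> unfolding D_def by blast
qed

lemma hausdorff_dist_mink_avg_convex_hull_le:
  fixes C L :: "'a::euclidean_space set"
  assumes iso: "\<And>j. isometry (A j)" and "compact C" and "C \<noteq> {}"
    and "compact L" and "L \<noteq> {}" and "m \<ge> 1"
  shows "hausdorff_dist (mink_avg A C m) L
    \<le> hausdorff_dist (mink_avg A (convex hull C) m) L + diameter (convex hull C) / sqrt m"
proof (rule hausdorff_dist_le_add_approx)
  show "compact (mink_avg A (convex hull C) m)"
    using \<open>compact C\<close> iso by (intro mink_avg_compact compact_convex_hull)
  show "mink_avg A C m \<subseteq> mink_avg A (convex hull C) m"
    by (intro mink_avg_mono hull_subset)
  show "\<exists>z\<in>mink_avg A C m. dist t z \<le> diameter (convex hull C) / sqrt m"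
    if "t \<in> mink_avg A (convex hull C) m" for t
    using iso compact_imp_bounded[OF \<open>compact C\<close>] \<open>m \<ge> 1\<close> that
    by (rule mink_avg_convex_hull_approx)
qed (simp_all add: assms mink_avg_nonempty)

theorem theorem2:
  fixes K :: "(real ^ 'n) set" and A :: "nat \<Rightarrow> real ^ 'n \<Rightarrow> real ^ 'n"
  assumes "K \<noteq> {}" and "compact K" and "convex K"
    and "\<And>m. isometry (A m)"
    and "hausdorff_converges_to (mink_avg A K) L"
  shows "\<forall>C. C \<noteq> {} \<and> compact C \<and> convex hull C = K \<longrightarrow>
           hausdorff_converges_to (mink_avg A C) L"
proof (intro allI impI)
  fix C assume "C \<noteq> {} \<and> compact C \<and> convex hull C = K"
  then have C: "C \<noteq> {}" "compact C" "K = convex hull C" by auto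
  have L: "L \<noteq> {}" "compact L" and K_lim: "(\<lambda>m. hausdorff_dist (mink_avg A K m) L) \<longlonglongrightarrow> 0"
    using assms(5) unfolding hausdorff_converges_to_def by auto
  define D where "D = diameter K"
  have "\<forall>m\<ge>1. hausdorff_dist (mink_avg A C m) L \<le> hausdorff_dist (mink_avg A K m) L + D / sqrt m"
    using hausdorff_dist_mink_avg_convex_hull_le[where A = A, OF assms(4) C(2,1) L(2,1)]
    unfolding D_def C(3) by blast
  then have upper: "eventually (\<lambda>m. hausdorff_dist (mink_avg A C m) L
      \<le> hausdorff_dist (mink_avg A K m) L + D / sqrt m) sequentially"
    unfolding eventually_sequentially by blast
  have "(\<lambda>m. hausdorff_dist (mink_avg A K m) L + D / sqrt m) \<longlonglongrightarrow> 0 + 0"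
    by (intro tendsto_add K_lim tendsto_divide_0[OF tendsto_const] filterlim_at_top_imp_at_infinity
        filterlim_compose[OF sqrt_at_top filterlim_real_sequentially])
  then have upper_lim: "(\<lambda>m. hausdorff_dist (mink_avg A K m) L + D / sqrt m) \<longlonglongrightarrow> 0"
    by simp
  have "\<forall>m. 0 \<le> hausdorff_dist (mink_avg A C m) L"
    using hausdorff_dist_nonneg[OF mink_avg_compact[where A = A, OF C(2) assms(4)] L(2)
        mink_avg_nonempty[OF C(1)]] by blast
  then have "(\<lambda>m. hausdorff_dist (mink_avg A C m) L) \<longlonglongrightarrow> 0"
    by (rule tendsto_sandwich[OF always_eventually upper tendsto_const upper_lim])
  then show "hausdorff_converges_to (mink_avg A C) L"
    unfolding hausdorff_converges_to_def using L by blast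
qed

end
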